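(* Let $A,B$ be nondeterministic parity tree automata over $\Sigma$, let $g$ be a guiding function from $B$ to $A$ that preserves acceptance, let $t$ be a $\Sigma$-tree, let $\rho_B$ be an accepting run of $B$ on $t$ and $\rho_A=g(\rho_B)$ (an accepting run of $A$ on $t$). Let $u\in\{0,1\}^*$ and $v\in\{0,1\}^+$ be such that $\rho_A(u)=\rho_A(u\cdot v)$ and $\rho_B(u)=\rho_B(u\cdot v)$. If the greatest priority on the edges of $\rho_B$ between positions $u$ and $u\cdot v$ (i.e., on the edges from $u\cdot v|_k$ to $u\cdot v|_{k+1}$ for $k<|v|$) is even, then the greatest priority on the corresponding edges of $\rho_A$ is even.
   Context: A $\Sigma$-tree is $t:\{0,1\}^*\to\Sigma$; $v|_k$ is the length-$k$ prefix of $v$. A nondeterministic $I$-parity tree automaton ($I$ a finite interval of naturals) is $(\Sigma,Q,q_I,\Delta,\Omega)$ with $Q$ finite, $\Delta\subseteq Q\times\Sigma\times Q\times Q$ complete, $\Omega:\Delta\to I^2$. A run on $t$ is $\rho:\{0,1\}^*\to\Delta$ with $\rho(\varepsilon)$ from $q_I$, $\rho(u)=(q,t(u),q_0,q_1)$ and $\rho(u\cdot d)$ from $q_d$; the edge from $u$ to $u\cdot d$ has priority the $d$-th component of $\Omega(\rho(u))$. A run is accepting if on every branch the $\limsup$ of edge priorities is even. A guiding function from $B$ to $A$ is $g:Q_A\times\Delta_B\to\Delta_A$ with $g(p,(q,a,q_0,q_1))=(p,a,p_0,p_1)$; for a run $\rho$ of $B$ on $t$, $g(\rho)(u)=g(s(u),\rho(u))=(s(u),t(u),p_0,p_1)$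 where $s(\varepsilon)=q_{I,A}$ and $s(u\cdot d)=p_d$. It preserves acceptance if $g(\rho)$ is accepting whenever $\rho$ is. *)

theory Defs
  imports Main
begin

text \<open>Tree positions in {0,1}^* are bool lists (False = direction 0, True = direction 1).
  A \<Sigma>-tree is a function bool list \<Rightarrow> 'a. Transitions are (q, a, q0, q1).\<close>

type_synonym ('q,'a) tr = "'q \<times> 'a \<times> 'q \<times> 'q"

record ('q,'a) pta =
  states :: "'q set"
  init :: 'q
  trans :: "('q,'a) tr set"
  pri :: "('q,'a) tr \<Rightarrow> nat \<times> nat"
  pmin :: nat
  pmax :: nat

definition tsrc :: "('q,'a) tr \<Rightarrow> 'q" where "tsrc \<delta> = fst \<delta>"
definition tlet :: "('q,'a) tr \<Rightarrow> 'a" where "tlet \<delta> = fst (snd \<delta>)"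
definition tsucc :: "('q,'a) tr \<Rightarrow> bool \<Rightarrow> 'q" where
  "tsucc \<delta> d = (if d then snd (snd (snd \<delta>)) else fst (snd (snd \<delta>)))"

definition is_pta :: "('q,'a) pta \<Rightarrow> bool" where
  "is_pta A \<longleftrightarrow> finite (states A) \<and> init A \<in> states A \<and> pmin A \<le> pmax A
    \<and> trans A \<subseteq> states A \<times> UNIV \<times> states A \<times> states A
    \<and> (\<forall>q\<in>states A. \<forall>a. \<exists>q0 q1. (q, a, q0, q1) \<in> trans A)
    \<and> (\<forall>\<delta>\<in>trans A. fst (pri A \<delta>) \<in> {pmin A..pmax A} \<and> snd (pri A \<delta>) \<in> {pmin A..pmax A})"

definition is_run :: "('q,'a) pta \<Rightarrow> (bool list \<Rightarrow> 'a) \<Rightarrow> (bool list \<Rightarrow> ('q,'a) tr) \<Rightarrow> bool" where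
  "is_run A t \<rho> \<longleftrightarrow> tsrc (\<rho> []) = init A
     \<and> (\<forall>u. \<rho> u \<in> trans A \<and> tlet (\<rho> u) = t u)
     \<and> (\<forall>u d. tsrc (\<rho> (u @ [d])) = tsucc (\<rho> u) d)"

definition edge_pri :: "('q,'a) pta \<Rightarrow> (bool list \<Rightarrow> ('q,'a) tr) \<Rightarrow> bool list \<Rightarrow> bool \<Rightarrow> nat" where
  "edge_pri A \<rho> u d = (if d then snd (pri A (\<rho> u)) else fst (pri A (\<rho> u)))"

definition branch_pris :: "('q,'a) pta \<Rightarrow> (bool list \<Rightarrow> ('q,'a) tr) \<Rightarrow> (nat \<Rightarrow> bool) \<Rightarrow> nat \<Rightarrow> nat" where
  "branch_pris A \<rho> b n = edge_pri A \<rho> (map b [0..<n]) (b n)"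

definition limsup_nat :: "(nat \<Rightarrow> nat) \<Rightarrow> nat" where
  "limsup_nat p = Max {m. \<exists>\<^sub>\<infinity>n. p n = m}"

definition accepting :: "('q,'a) pta \<Rightarrow> (bool list \<Rightarrow> ('q,'a) tr) \<Rightarrow> bool" where
  "accepting A \<rho> \<longleftrightarrow> (\<forall>b. even (limsup_nat (branch_pris A \<rho> b)))"

definition is_guiding :: "('p,'a) pta \<Rightarrow> ('q,'a) pta \<Rightarrow> ('p \<Rightarrow> ('q,'a) tr \<Rightarrow> ('p,'a) tr) \<Rightarrow> bool" where
  "is_guiding A B g \<longleftrightarrow> (\<forall>p\<in>states A. \<forall>\<delta>\<in>trans B.
      g p \<delta> \<in> trans A \<and> tsrc (g p \<delta>) = p \<and> tlet (g p \<delta>) = tlet \<delta>)"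

fun gstate_aux :: "('p \<Rightarrow> ('q,'a) tr \<Rightarrow> ('p,'a) tr) \<Rightarrow> (bool list \<Rightarrow> ('q,'a) tr) \<Rightarrow> 'p \<Rightarrow> bool list \<Rightarrow> bool list \<Rightarrow> 'p" where
  "gstate_aux g \<rho> q u [] = q"
| "gstate_aux g \<rho> q u (d # w) = gstate_aux g \<rho> (tsucc (g q (\<rho> u)) d) (u @ [d]) w"

definition gstate :: "('p,'a) pta \<Rightarrow> ('p \<Rightarrow> ('q,'a) tr \<Rightarrow> ('p,'a) tr) \<Rightarrow> (bool list \<Rightarrow> ('q,'a) tr) \<Rightarrow> bool list \<Rightarrow> 'p" where
  "gstate A g \<rho> u = gstate_aux g \<rho> (init A) [] u"

definition guided_run :: "('p,'a) pta \<Rightarrow> ('p \<Rightarrow> ('q,'a) tr \<Rightarrow> ('p,'a) tr) \<Rightarrow> (bool list \<Rightarrow> ('q,'a) tr) \<Rightarrow> bool list \<Rightarrow> ('p,'a) tr" where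
  "guided_run A g \<rho> u = g (gstate A g \<rho> u) (\<rho> u)"

definition preserves_acceptance :: "('p,'a) pta \<Rightarrow> ('q,'a) pta \<Rightarrow> ('p \<Rightarrow> ('q,'a) tr \<Rightarrow> ('p,'a) tr) \<Rightarrow> bool" where
  "preserves_acceptance A B g \<longleftrightarrow>
     (\<forall>t \<rho>. is_run B t \<rho> \<and> accepting B \<rho> \<longrightarrow> accepting A (guided_run A g \<rho>))"

definition seg_max :: "('q,'a) pta \<Rightarrow> (bool list \<Rightarrow> ('q,'a) tr) \<Rightarrow> bool list \<Rightarrow> bool list \<Rightarrow> nat" where
  "seg_max A \<rho> u v = Max ((\<lambda>k. edge_pri A \<rho> (u @ take k v) (v ! k)) ` {..<length v})"

end

theory Submission
  imports Defs "HOL-Library.Omega_Words_Fun"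
begin

text \<open>Pump the loop. Let F send a position to the corresponding position of the tree in which
  the segment from u to u\<cdot>v is repeated forever. Since \<rho>B(u) = \<rho>B(u\<cdot>v), the map \<rho>B \<circ> F
  is a run of B on t \<circ> F, and it is accepting: along the branch u\<cdot>v\<cdot>v\<cdot>\<dots> the priorities of the
  segment recur forever, and their maximum is even by assumption, while every other branch
  eventually leaves the loop and from then on follows a branch of \<rho>B. A guiding function
  only looks at the current transition, so, as \<rho>A(u) = \<rho>A(u\<cdot>v), the run of A guided by
  \<rho>B \<circ> F is \<rho>A \<circ> F. It is accepting, and on the branch u\<cdot>v\<cdot>v\<cdot>\<dots> its limsup is the
  maximal priority of \<rho>A on the segment.\<close>

lemma limsup_nat_eq_Max_limit: "limsup_nat p = Max (limit p)"
  unfolding limsup_nat_def limit_def ..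

lemma limsup_nat_suffix: "limsup_nat (suffix k p) = limsup_nat p"
  by (simp add: limsup_nat_eq_Max_limit)

lemma limsup_nat_iter: "xs \<noteq> [] \<Longrightarrow> limsup_nat (xs\<^sup>\<omega>) = Max (set xs)"
  by (simp add: limsup_nat_eq_Max_limit)

lemma prefix_iter_concat_replicate:
  assumes "v \<noteq> []"
  shows "prefix (k * length v) (v\<^sup>\<omega>) = concat (replicate k v)"
proof (induction k)
  case (Suc k)
  have "prefix (Suc k * length v) (v\<^sup>\<omega>) = prefix (length v + k * length v) (v \<frown> v\<^sup>\<omega>)"
    using assms by (simp flip: iter_unroll)
  also have "\<dots> = v @ concat (replicate k v)"
    using Suc.IH by simp
  finally show ?case by simp
qed simp

text \<open>Positions in the tree where the segment from u to u\<cdot>v is pumped: on reaching u\<cdot>v,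
  jump back to u.\<close>

definition fold_loop_step :: "'a list \<Rightarrow> 'a list \<Rightarrow> 'a list \<Rightarrow> 'a \<Rightarrow> 'a list" where
  "fold_loop_step u v y d = (if y @ [d] = u @ v then u else y @ [d])"

definition fold_loop :: "'a list \<Rightarrow> 'a list \<Rightarrow> 'a list \<Rightarrow> 'a list" where
  "fold_loop u v x = foldl (fold_loop_step u v) [] x"

lemma fold_loop_Nil [simp]: "fold_loop u v [] = []"
  by (simp add: fold_loop_def)

lemma fold_loop_snoc [simp]:
  "fold_loop u v (x @ [d]) = fold_loop_step u v (fold_loop u v x) d"
  by (simp add: fold_loop_def)

lemma fold_loop_short: "length x < length (u @ v) \<Longrightarrow> fold_loop u v x = x"
  by (induction x rule: rev_induct) (auto simp: fold_loop_step_def dest: arg_cong[of _ _ length])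

lemma fold_loop_snoc_cong:
  assumes "\<phi> u = \<phi> (u @ v)"
  shows "\<phi> (fold_loop u v (x @ [d])) = \<phi> (fold_loop u v x @ [d])"
  using assms by (simp add: fold_loop_step_def)

lemma fold_loop_cases:
  "fold_loop u v x = x \<or> (\<exists>k w. x = u @ concat (replicate k v) @ w \<and> fold_loop u v x = u @ w)"
proof (induction x rule: rev_induct)
  case (snoc d x)
  show ?case
  proof (cases "fold_loop u v x @ [d] = u @ v")
    case True
    from snoc.IH have "\<exists>k. x @ [d] = u @ concat (replicate k v)"
    proof
      assume "fold_loop u v x = x"
      with True have "x @ [d] = u @ concat (replicate 1 v)" by simp
      then show ?thesis ..
    next
      assume "\<exists>k w. x = u @ concat (replicate k v) @ w \<and> fold_loop u v x = u @ w"
      then obtain k w where "x = u @ concat (replicate k v) @ w" "w @ [d] = v"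
        using True by auto
      then have "x @ [d] = u @ concat (replicate k v @ [v])" by simp
      then show ?thesis by (metis replicate_append_same replicate_Suc)
    qed
    with True show ?thesis by (auto simp: fold_loop_step_def)
  next
    case False
    with snoc.IH show ?thesis by (force simp: fold_loop_step_def)
  qed
qed simp

lemma fold_loop_eq_loop_start:
  assumes "fold_loop u v x = u"
  shows "\<exists>k. x = u @ concat (replicate k v)"
  using fold_loop_cases[of u v x] assms by auto

lemma fold_loop_step_off_loop:
  assumes "v \<noteq> []" and "prefix (Suc n) b \<noteq> prefix (Suc n) (u \<frown> v\<^sup>\<omega>)"
  shows "fold_loop u v (prefix (Suc n) b) = fold_loop u v (prefix n b) @ [b n]"
proof (rule ccontr)
  assume "\<not> ?thesis"
  then have "fold_loop u v (prefix (Suc n) b) = u"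
    by (simp add: fold_loop_step_def split: if_splits)
  then obtain k where k: "prefix (Suc n) b = u @ concat (replicate k v)"
    using fold_loop_eq_loop_start by blast
  moreover have "prefix (length u + k * length v) (u \<frown> v\<^sup>\<omega>) = u @ concat (replicate k v)"
    using assms(1) by (simp add: prefix_iter_concat_replicate)
  moreover have "Suc n = length u + k * length v"
    using arg_cong[OF k, of length] by (simp add: length_concat sum_list_replicate)
  ultimately show False
    using assms(2) by simp
qed

lemma branch_pris_eq: "branch_pris C \<rho> b n = edge_pri C \<rho> (prefix n b) (b n)"
  by (simp add: branch_pris_def subsequence_def)

lemma branch_pris_comp:
  "branch_pris C (\<rho> \<circ> f) b n = edge_pri C \<rho> (f (prefix n b)) (b n)"
  by (simp add: branch_pris_eq edge_pri_def)

lemma fold_loop_along_loop: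
  assumes "v \<noteq> []"
  shows "fold_loop u v (u @ prefix m (v\<^sup>\<omega>)) = u @ take (m mod length v) v"
proof (induction m)
  case 0
  show ?case using assms by (simp add: fold_loop_short)
next
  case (Suc m)
  let ?i = "m mod length v"
  have "u @ prefix (Suc m) (v\<^sup>\<omega>) = (u @ prefix m (v\<^sup>\<omega>)) @ [v ! ?i]"
    using assms by simp
  then have "fold_loop u v (u @ prefix (Suc m) (v\<^sup>\<omega>))
      = fold_loop_step u v (u @ take ?i v) (v ! ?i)"
    using Suc.IH by (simp only: fold_loop_snoc)
  also have "\<dots> = u @ take (Suc m mod length v) v"
  proof (cases "Suc ?i = length v")
    case True
    then have "take ?i v @ [v ! ?i] = v"
      by (metis lessI take_Suc_conv_app_nth take_all_iff order_refl)
    with True show ?thesis by (simp add: fold_loop_step_def mod_Suc)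
  next
    case False
    then have "Suc ?i < length v"
      using assms by (metis Suc_lessI length_greater_0_conv mod_less_divisor)
    then have "take ?i v @ [v ! ?i] = take (Suc ?i) v" "take (Suc ?i) v \<noteq> v"
      by (simp add: take_Suc_conv_app_nth, simp add: take_all_iff)
    with False show ?thesis by (simp add: fold_loop_step_def mod_Suc)
  qed
  finally show ?case .
qed

lemma limsup_branch_pris_fold_loop_along_loop:
  assumes "v \<noteq> []"
  shows "limsup_nat (branch_pris C (\<rho> \<circ> fold_loop u v) (u \<frown> v\<^sup>\<omega>)) = seg_max C \<rho> u v"
proof -
  define h where "h k = edge_pri C \<rho> (u @ take k v) (v ! k)" for k
  have "suffix (length u) (branch_pris C (\<rho> \<circ> fold_loop u v) (u \<frown> v\<^sup>\<omega>)) n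
      = (map h [0..<length v])\<^sup>\<omega> n" for n
  proof -
    have "suffix (length u) (branch_pris C (\<rho> \<circ> fold_loop u v) (u \<frown> v\<^sup>\<omega>)) n
       = edge_pri C \<rho> (fold_loop u v (u @ prefix n (v\<^sup>\<omega>))) (v\<^sup>\<omega> n)"
      by (simp only: suffix_nth branch_pris_comp prefix_conc_snd[OF le_add1] conc_snd, simp)
    also have "\<dots> = h (n mod length v)"
      using assms by (simp add: fold_loop_along_loop h_def)
    finally show ?thesis using assms by simp
  qed
  then have "limsup_nat (branch_pris C (\<rho> \<circ> fold_loop u v) (u \<frown> v\<^sup>\<omega>))
      = limsup_nat ((map h [0..<length v])\<^sup>\<omega>)"
    by (metis limsup_nat_suffix ext)
  also have "\<dots> = Max (h ` {..<length v})"
    using assms by (simp add: limsup_nat_iter atLeast0LessThan)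
  finally show ?thesis
    by (simp add: seg_max_def h_def)
qed

lemma limsup_branch_pris_fold_loop_off_loop:
  assumes "v \<noteq> []" and "b \<noteq> u \<frown> v\<^sup>\<omega>"
  obtains b' where
    "limsup_nat (branch_pris C (\<rho> \<circ> fold_loop u v) b) = limsup_nat (branch_pris C \<rho> b')"
proof -
  obtain n\<^sub>0 where n\<^sub>0: "b n\<^sub>0 \<noteq> (u \<frown> v\<^sup>\<omega>) n\<^sub>0"
    using assms(2) by blast
  have off_loop: "prefix (Suc n) b \<noteq> prefix (Suc n) (u \<frown> v\<^sup>\<omega>)" if "n\<^sub>0 \<le> n" for n
    using n\<^sub>0 that by (metis le_imp_less_Suc subsequence_nth diff_zero add_0)
  define y where "y = fold_loop u v (prefix n\<^sub>0 b)"
  define b' where "b' = y \<frown> suffix n\<^sub>0 b"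
  have fold: "fold_loop u v (prefix (n\<^sub>0 + m) b) = prefix (length y + m) b'" for m
  proof (induction m)
    case 0
    show ?case by (simp add: y_def b'_def)
  next
    case (Suc m)
    have "fold_loop u v (prefix (Suc (n\<^sub>0 + m)) b) = fold_loop u v (prefix (n\<^sub>0 + m) b) @ [b (n\<^sub>0 + m)]"
      by (rule fold_loop_step_off_loop[OF assms(1) off_loop]) simp
    also have "\<dots> = prefix (length y + m) b' @ [b' (length y + m)]"
      using Suc.IH by (simp add: b'_def)
    finally show ?case by simp
  qed
  have "suffix n\<^sub>0 (branch_pris C (\<rho> \<circ> fold_loop u v) b) m
      = suffix (length y) (branch_pris C \<rho> b') m" for m
  proof -
    have "suffix n\<^sub>0 (branch_pris C (\<rho> \<circ> fold_loop u v) b) m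
        = edge_pri C \<rho> (fold_loop u v (prefix (n\<^sub>0 + m) b)) (b (n\<^sub>0 + m))"
      by (simp only: suffix_nth branch_pris_comp)
    also have "\<dots> = edge_pri C \<rho> (prefix (length y + m) b') (b' (length y + m))"
      by (simp only: fold) (simp add: b'_def)
    also have "\<dots> = suffix (length y) (branch_pris C \<rho> b') m"
      by (simp only: suffix_nth branch_pris_eq)
    finally show ?thesis .
  qed
  then show ?thesis
    by (metis that limsup_nat_suffix ext)
qed

lemma accepting_comp_fold_loop:
  assumes "accepting C \<rho>" and "v \<noteq> []" and "even (seg_max C \<rho> u v)"
  shows "accepting C (\<rho> \<circ> fold_loop u v)"
  unfolding accepting_def
proof
  fix b
  show "even (limsup_nat (branch_pris C (\<rho> \<circ> fold_loop u v) b))"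
  proof (cases "b = u \<frown> v\<^sup>\<omega>")
    case True
    with assms(2,3) show ?thesis
      by (simp add: limsup_branch_pris_fold_loop_along_loop)
  next
    case False
    with assms(1,2) show ?thesis
      by (metis limsup_branch_pris_fold_loop_off_loop accepting_def)
  qed
qed

lemma is_run_comp_fold_loop:
  assumes "is_run C t \<rho>" and "\<rho> u = \<rho> (u @ v)"
  shows "is_run C (t \<circ> fold_loop u v) (\<rho> \<circ> fold_loop u v)"
proof -
  have "tsrc (\<rho> (fold_loop u v (x @ [d]))) = tsucc (\<rho> (fold_loop u v x)) d" for x d
    using fold_loop_snoc_cong[of \<rho>, OF assms(2)] assms(1) unfolding is_run_def by metis
  with assms(1) show ?thesis
    unfolding is_run_def by simp
qed

lemma gstate_aux_snoc:
  "gstate_aux g \<rho> q u (w @ [d]) = tsucc (g (gstate_aux g \<rho> q u w) (\<rho> (u @ w))) d"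
  by (induction w arbitrary: q u) auto

lemma gstate_snoc: "gstate A g \<rho> (x @ [d]) = tsucc (guided_run A g \<rho> x) d"
  by (simp add: gstate_def guided_run_def gstate_aux_snoc)

lemma guided_run_comp_fold_loop:
  assumes "\<rho> u = \<rho> (u @ v)" and "guided_run A g \<rho> u = guided_run A g \<rho> (u @ v)"
  shows "guided_run A g (\<rho> \<circ> fold_loop u v) = guided_run A g \<rho> \<circ> fold_loop u v"
proof
  fix x
  show "guided_run A g (\<rho> \<circ> fold_loop u v) x = (guided_run A g \<rho> \<circ> fold_loop u v) x"
  proof (induction x rule: rev_induct)
    case Nil
    show ?case by (simp add: guided_run_def gstate_def)
  next
    case (snoc d x)
    have "gstate A g (\<rho> \<circ> fold_loop u v) (x @ [d]) = gstate A g \<rho> (fold_loop u v x @ [d])"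
      using snoc.IH by (simp only: gstate_snoc comp_def)
    moreover have "\<rho> (fold_loop u v (x @ [d])) = \<rho> (fold_loop u v x @ [d])"
      using assms(1) by (rule fold_loop_snoc_cong)
    ultimately have "guided_run A g (\<rho> \<circ> fold_loop u v) (x @ [d])
        = guided_run A g \<rho> (fold_loop u v x @ [d])"
      by (simp only: guided_run_def comp_def)
    also have "\<dots> = guided_run A g \<rho> (fold_loop u v (x @ [d]))"
      using assms(2) by (rule fold_loop_snoc_cong[symmetric])
    finally show ?case by (simp add: comp_def)
  qed
qed

theorem lemma1:
  fixes A :: "('p,'a) pta" and B :: "('q,'a) pta"
    and g :: "'p \<Rightarrow> ('q,'a) tr \<Rightarrow> ('p,'a) tr"
    and t :: "bool list \<Rightarrow> 'a" and \<rho>B :: "bool list \<Rightarrow> ('q,'a) tr"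
    and u v :: "bool list"
  assumes "is_pta A" and "is_pta B"
    and "is_guiding A B g" and "preserves_acceptance A B g"
    and "is_run B t \<rho>B" and "accepting B \<rho>B"
    and "v \<noteq> []"
    and "guided_run A g \<rho>B u = guided_run A g \<rho>B (u @ v)"
    and "\<rho>B u = \<rho>B (u @ v)"
    and "even (seg_max B \<rho>B u v)"
  shows "even (seg_max A (guided_run A g \<rho>B) u v)"
proof -
  let ?\<rho>A = "guided_run A g \<rho>B"
  have "is_run B (t \<circ> fold_loop u v) (\<rho>B \<circ> fold_loop u v)"
    using assms(5,9) by (rule is_run_comp_fold_loop)
  moreover have "accepting B (\<rho>B \<circ> fold_loop u v)"
    using assms(6,7,10) by (rule accepting_comp_fold_loop)
  ultimately have "accepting A (guided_run A g (\<rho>B \<circ> fold_loop u v))"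
    using assms(4) unfolding preserves_acceptance_def by blast
  then have "accepting A (?\<rho>A \<circ> fold_loop u v)"
    using assms(8,9) by (simp add: guided_run_comp_fold_loop)
  then have "even (limsup_nat (branch_pris A (?\<rho>A \<circ> fold_loop u v) (u \<frown> v\<^sup>\<omega>)))"
    unfolding accepting_def ..
  with assms(7) show ?thesis
    by (simp add: limsup_branch_pris_fold_loop_along_loop)
qed

end
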